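(* Let $\Re_1,\Re_2$ be commutative Krasner hyperrings with identity, $\varphi_i:L(\Re_i)\to L(\Re_i)\cup\{\emptyset\}$ functions ($i=1,2$), $\Re=\Re_1\times\Re_2$, and $\phi=\varphi_1\times\varphi_2$, i.e. $\phi(N_1\times N_2)=\varphi_1(N_1)\times\varphi_2(N_2)$. Then a proper hyperideal $N$ of $\Re$ is $\phi$-prime if and only if $N$ is of one of the following types: (i) $N=N_1\times N_2$ where $N_i$ is a proper hyperideal of $\Re_i$ with $\varphi_i(N_i)=N_i$ ($i=1,2$); (ii) $N=N_1\times\Re_2$ where $N_1$ is a proper $\varphi_1$-prime hyperideal of $\Re_1$, which must be prime if $\varphi_2(\Re_2)\ne\Re_2$; (iii) $N=\Re_1\times N_2$ where $N_2$ is a proper $\varphi_2$-prime hyperideal of $\Re_2$, which must be prime if $\varphi_1(\Re_1)\ne\Re_1$.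
   Context: Krasner hyperring: $(\Re,\oplus)$ canonical hypergroup, $(\Re,\circ)$ commutative semigroup with identity $1\ne0$, $0$ absorbing, distributive. Hyperideals and $L(\Re)$ as usual. $\Re_1\times\Re_2$ has componentwise operations and every hyperideal has the form $N_1\times N_2$ with $N_i\in L(\Re_i)$; a product with $\emptyset$ is $\emptyset$. A hyperideal $N$ is $\psi$-prime if $a\circ b\in N$, $a\circ b\notin\psi(N)$ imply $a\in N$ or $b\in N$; prime if $a\circ b\in N$ implies $a\in N$ or $b\in N$. *)

theory Defs
  imports Main
begin

record 'a hyperring =
  carrier :: "'a set"
  hadd :: "'a \<Rightarrow> 'a \<Rightarrow> 'a set"
  hmul :: "'a \<Rightarrow> 'a \<Rightarrow> 'a"
  hzero :: "'a"
  hone :: "'a"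

definition hadd_set :: "('a, 'b) hyperring_scheme \<Rightarrow> 'a set \<Rightarrow> 'a \<Rightarrow> 'a set" where
  "hadd_set R A z = (\<Union>a\<in>A. hadd R a z)"

definition hadd_set_r :: "('a, 'b) hyperring_scheme \<Rightarrow> 'a \<Rightarrow> 'a set \<Rightarrow> 'a set" where
  "hadd_set_r R x A = (\<Union>a\<in>A. hadd R x a)"

definition hneg :: "('a, 'b) hyperring_scheme \<Rightarrow> 'a \<Rightarrow> 'a" where
  "hneg R x = (THE y. y \<in> carrier R \<and> hzero R \<in> hadd R x y)"

definition canonical_hypergroup :: "('a, 'b) hyperring_scheme \<Rightarrow> bool" where
  "canonical_hypergroup R \<longleftrightarrow>
     (\<forall>x\<in>carrier R. \<forall>y\<in>carrier R. hadd R x y \<subseteq> carrier R \<and> hadd R x y \<noteq> {}) \<and>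
     (\<forall>x\<in>carrier R. \<forall>y\<in>carrier R. \<forall>z\<in>carrier R.
        hadd_set R (hadd R x y) z = hadd_set_r R x (hadd R y z)) \<and>
     (\<forall>x\<in>carrier R. \<forall>y\<in>carrier R. hadd R x y = hadd R y x) \<and>
     hzero R \<in> carrier R \<and>
     (\<forall>x\<in>carrier R. hadd R (hzero R) x = {x}) \<and>
     (\<forall>x\<in>carrier R. \<exists>!y. y \<in> carrier R \<and> hzero R \<in> hadd R x y) \<and>
     (\<forall>x\<in>carrier R. \<forall>y\<in>carrier R. \<forall>z\<in>carrier R.
        z \<in> hadd R x y \<longrightarrow> x \<in> hadd R z (hneg R y) \<and> y \<in> hadd R (hneg R x) z)"

definition krasner_hyperring :: "('a, 'b) hyperring_scheme \<Rightarrow> bool" where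
  "krasner_hyperring R \<longleftrightarrow>
     canonical_hypergroup R \<and>
     (\<forall>x\<in>carrier R. \<forall>y\<in>carrier R. hmul R x y \<in> carrier R) \<and>
     (\<forall>x\<in>carrier R. \<forall>y\<in>carrier R. \<forall>z\<in>carrier R.
        hmul R (hmul R x y) z = hmul R x (hmul R y z)) \<and>
     (\<forall>x\<in>carrier R. \<forall>y\<in>carrier R. hmul R x y = hmul R y x) \<and>
     hone R \<in> carrier R \<and> hone R \<noteq> hzero R \<and>
     (\<forall>x\<in>carrier R. hmul R (hone R) x = x) \<and>
     (\<forall>x\<in>carrier R. hmul R (hzero R) x = hzero R) \<and>
     (\<forall>x\<in>carrier R. \<forall>y\<in>carrier R. \<forall>z\<in>carrier R.
        hmul R x ` hadd R y z = hadd R (hmul R x y) (hmul R x z))"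

text \<open>Hyperideals; \<open>hyperideals R\<close> is \<open>L(R)\<close>.\<close>
definition hyperideal :: "('a, 'b) hyperring_scheme \<Rightarrow> 'a set \<Rightarrow> bool" where
  "hyperideal R I \<longleftrightarrow>
     I \<subseteq> carrier R \<and> I \<noteq> {} \<and>
     (\<forall>a\<in>I. \<forall>b\<in>I. hadd R a (hneg R b) \<subseteq> I) \<and>
     (\<forall>r\<in>carrier R. \<forall>a\<in>I. hmul R r a \<in> I)"

definition hyperideals :: "('a, 'b) hyperring_scheme \<Rightarrow> 'a set set" where
  "hyperideals R = {I. hyperideal R I}"

definition psi_prime :: "('a, 'b) hyperring_scheme \<Rightarrow> ('a set \<Rightarrow> 'a set) \<Rightarrow> 'a set \<Rightarrow> bool" where
  "psi_prime R \<psi> N \<longleftrightarrow> hyperideal R N \<and>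
     (\<forall>a\<in>carrier R. \<forall>b\<in>carrier R.
        hmul R a b \<in> N \<longrightarrow> hmul R a b \<notin> \<psi> N \<longrightarrow> a \<in> N \<or> b \<in> N)"

definition prime_hyperideal :: "('a, 'b) hyperring_scheme \<Rightarrow> 'a set \<Rightarrow> bool" where
  "prime_hyperideal R N \<longleftrightarrow> hyperideal R N \<and>
     (\<forall>a\<in>carrier R. \<forall>b\<in>carrier R. hmul R a b \<in> N \<longrightarrow> a \<in> N \<or> b \<in> N)"

definition prod_hyperring ::
  "('a, 'c) hyperring_scheme \<Rightarrow> ('b, 'd) hyperring_scheme \<Rightarrow> ('a \<times> 'b) hyperring" where
  "prod_hyperring R1 R2 =
    \<lparr> carrier = carrier R1 \<times> carrier R2,
      hadd = (\<lambda>x y. hadd R1 (fst x) (fst y) \<times> hadd R2 (snd x) (snd y)),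
      hmul = (\<lambda>x y. (hmul R1 (fst x) (fst y), hmul R2 (snd x) (snd y))),
      hzero = (hzero R1, hzero R2),
      hone = (hone R1, hone R2) \<rparr>"

text \<open>\<open>\<phi> = \<phi>1 \<times> \<phi>2\<close>: \<open>\<phi>(N1 \<times> N2) = \<phi>1(N1) \<times> \<phi>2(N2)\<close> (every hyperideal of the
product is of the form \<open>N1 \<times> N2\<close>, with \<open>N1 = fst ` N\<close>, \<open>N2 = snd ` N\<close>).\<close>
definition phi_prod :: "('a set \<Rightarrow> 'a set) \<Rightarrow> ('b set \<Rightarrow> 'b set) \<Rightarrow> ('a \<times> 'b) set \<Rightarrow> ('a \<times> 'b) set" where
  "phi_prod \<phi>1 \<phi>2 N = \<phi>1 (fst ` N) \<times> \<phi>2 (snd ` N)"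

end

theory Submission
  imports Defs
begin

text \<open>Multiplying by \<open>(1, 0)\<close> and \<open>(0, 1)\<close> shows that every hyperideal of \<open>R1 \<times> R2\<close> is a
product \<open>N1 \<times> N2\<close> of hyperideals, and the \<open>\<phi>\<close>-prime condition for \<open>N1 \<times> N2\<close> splits into
componentwise conditions. If both factors are proper, then \<open>(1, 0) \<cdot> (x, 1) = (x, 0) \<in> N\<close> with
neither factor in \<open>N\<close>, so \<open>(x, 0) \<in> \<phi>(N)\<close> for every \<open>x \<in> N1\<close>, and symmetrically; with
\<open>\<phi>i(Ni) \<subseteq> Ni\<close> this forces \<open>\<phi>i(Ni) = Ni\<close>, and conversely a hyperideal with \<open>N \<subseteq> \<phi>(N)\<close> is
trivially \<open>\<phi>\<close>-prime. If \<open>N2 = R2\<close>, testing with second components \<open>1\<close> reduces the condition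
to \<open>\<phi>1\<close>-primeness of \<open>N1\<close>, except that the exemption \<open>ab \<in> \<phi>1(N1)\<close> is only available when
\<open>1 \<in> \<phi>2(R2)\<close>, i.e. \<open>\<phi>2(R2) = R2\<close>; otherwise \<open>N1\<close> must be prime. The case \<open>N1 = R1\<close> follows by
swapping the factors.\<close>

lemma canonical_hypergroupD:
  assumes "canonical_hypergroup R"
  shows hzero_closed: "hzero R \<in> carrier R"
    and hadd_closed: "x \<in> carrier R \<Longrightarrow> y \<in> carrier R \<Longrightarrow> hadd R x y \<subseteq> carrier R"
    and hadd_nonempty: "x \<in> carrier R \<Longrightarrow> y \<in> carrier R \<Longrightarrow> hadd R x y \<noteq> {}"
    and hadd_commute: "x \<in> carrier R \<Longrightarrow> y \<in> carrier R \<Longrightarrow> hadd R x y = hadd R y x"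
    and hzero_hadd: "x \<in> carrier R \<Longrightarrow> hadd R (hzero R) x = {x}"
    and hneg_ex1: "x \<in> carrier R \<Longrightarrow> \<exists>!y. y \<in> carrier R \<and> hzero R \<in> hadd R x y"
  using assms unfolding canonical_hypergroup_def by auto

lemma krasner_hyperringD:
  assumes "krasner_hyperring R"
  shows krasner_canonical: "canonical_hypergroup R"
    and hmul_closed: "x \<in> carrier R \<Longrightarrow> y \<in> carrier R \<Longrightarrow> hmul R x y \<in> carrier R"
    and hmul_commute: "x \<in> carrier R \<Longrightarrow> y \<in> carrier R \<Longrightarrow> hmul R x y = hmul R y x"
    and hone_closed: "hone R \<in> carrier R"
    and hone_hmul: "x \<in> carrier R \<Longrightarrow> hmul R (hone R) x = x"
    and hzero_hmul: "x \<in> carrier R \<Longrightarrow> hmul R (hzero R) x = hzero R"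
  using assms unfolding krasner_hyperring_def by auto

lemma hmul_hone:
  "krasner_hyperring R \<Longrightarrow> x \<in> carrier R \<Longrightarrow> hmul R x (hone R) = x"
  by (metis hmul_commute hone_closed hone_hmul)

lemma
  assumes "canonical_hypergroup R" "x \<in> carrier R"
  shows hneg_closed: "hneg R x \<in> carrier R"
    and hzero_in_hadd_hneg: "hzero R \<in> hadd R x (hneg R x)"
  using theI'[OF hneg_ex1[OF assms]] unfolding hneg_def by blast+

lemma hneg_eqI:
  assumes "canonical_hypergroup R" "x \<in> carrier R" "y \<in> carrier R" "hzero R \<in> hadd R x y"
  shows "hneg R x = y"
  unfolding hneg_def by (rule the1_equality[OF hneg_ex1[OF assms(1,2)]]) (use assms in blast)

lemma hadd_hzero: "canonical_hypergroup R \<Longrightarrow> x \<in> carrier R \<Longrightarrow> hadd R x (hzero R) = {x}"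
  by (metis hadd_commute hzero_closed hzero_hadd)

lemma hneg_hzero: "canonical_hypergroup R \<Longrightarrow> hneg R (hzero R) = hzero R"
  by (simp add: hneg_eqI hzero_closed hzero_hadd)

lemma hneg_hneg: "canonical_hypergroup R \<Longrightarrow> x \<in> carrier R \<Longrightarrow> hneg R (hneg R x) = x"
  by (metis hneg_eqI hneg_closed hzero_in_hadd_hneg hadd_commute)

lemma prod_hyperring_simps [simp]:
  "carrier (prod_hyperring R1 R2) = carrier R1 \<times> carrier R2"
  "hadd (prod_hyperring R1 R2) x y = hadd R1 (fst x) (fst y) \<times> hadd R2 (snd x) (snd y)"
  "hmul (prod_hyperring R1 R2) x y = (hmul R1 (fst x) (fst y), hmul R2 (snd x) (snd y))"
  "hzero (prod_hyperring R1 R2) = (hzero R1, hzero R2)"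
  "hone (prod_hyperring R1 R2) = (hone R1, hone R2)"
  by (simp_all add: prod_hyperring_def)

lemma hneg_prod_hyperring:
  assumes "canonical_hypergroup R1" "canonical_hypergroup R2" "x \<in> carrier R1" "y \<in> carrier R2"
  shows "hneg (prod_hyperring R1 R2) (x, y) = (hneg R1 x, hneg R2 y)"
proof -
  have "\<exists>!z. z \<in> carrier (prod_hyperring R1 R2) \<and>
      hzero (prod_hyperring R1 R2) \<in> hadd (prod_hyperring R1 R2) (x, y) z"
    using hneg_ex1[OF assms(1,3)] hneg_ex1[OF assms(2,4)] by (simp add: Ex1_def) blast
  then show ?thesis
    unfolding hneg_def[of "prod_hyperring R1 R2"]
    by (rule the1_equality) (simp add: assms hneg_closed hzero_in_hadd_hneg)
qed

lemma hyperidealD: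
  assumes "hyperideal R I"
  shows hyperideal_subset: "I \<subseteq> carrier R"
    and hyperideal_nonempty: "I \<noteq> {}"
    and hyperideal_hadd_hneg: "a \<in> I \<Longrightarrow> b \<in> I \<Longrightarrow> hadd R a (hneg R b) \<subseteq> I"
    and hyperideal_hmul: "r \<in> carrier R \<Longrightarrow> a \<in> I \<Longrightarrow> hmul R r a \<in> I"
  using assms unfolding hyperideal_def by auto

lemma hyperideal_carrier:
  assumes "krasner_hyperring R"
  shows "hyperideal R (carrier R)"
proof -
  have C: "canonical_hypergroup R"
    using assms by (rule krasner_canonical)
  show ?thesis
    unfolding hyperideal_def
    using hzero_closed[OF C] hadd_closed[OF C] hneg_closed[OF C] hmul_closed[OF assms] by blast
qed

lemma hone_in_hyperideal_iff:
  assumes "krasner_hyperring R" "hyperideal R I"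
  shows "hone R \<in> I \<longleftrightarrow> I = carrier R"
proof
  assume one: "hone R \<in> I"
  have "r \<in> I" if "r \<in> carrier R" for r
    using hyperideal_hmul[OF assms(2) that one] hmul_hone[OF assms(1) that] by simp
  then show "I = carrier R"
    using hyperideal_subset[OF assms(2)] by blast
next
  assume "I = carrier R"
  then show "hone R \<in> I"
    using hone_closed[OF assms(1)] by simp
qed

lemma hyperideal_prod_times_iff:
  assumes K1: "krasner_hyperring R1" and K2: "krasner_hyperring R2"
  shows "hyperideal (prod_hyperring R1 R2) (A \<times> B) \<longleftrightarrow> hyperideal R1 A \<and> hyperideal R2 B"
    (is "hyperideal ?P _ \<longleftrightarrow> _")
proof -
  have C1: "canonical_hypergroup R1" and C2: "canonical_hypergroup R2"
    using K1 K2 by (auto intro: krasner_canonical)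
  show ?thesis
  proof
    assume H: "hyperideal ?P (A \<times> B)"
    then have ne: "A \<noteq> {}" "B \<noteq> {}" and sub: "A \<subseteq> carrier R1" "B \<subseteq> carrier R2"
      using hyperideal_nonempty hyperideal_subset by fastforce+
    obtain a0 c0 where a0: "a0 \<in> A" and c0: "c0 \<in> B"
      using ne by blast
    have diff: "hadd R1 a (hneg R1 a') \<subseteq> A" "hadd R2 c (hneg R2 c') \<subseteq> B"
      if "a \<in> A" "a' \<in> A" "c \<in> B" "c' \<in> B" for a a' c c'
    proof -
      have "a \<in> carrier R1" "a' \<in> carrier R1" "c \<in> carrier R2" "c' \<in> carrier R2"
        using that sub by auto
      then have "hadd R1 a (hneg R1 a') \<times> hadd R2 c (hneg R2 c') \<subseteq> A \<times> B"
        and "hadd R1 a (hneg R1 a') \<noteq> {}" "hadd R2 c (hneg R2 c') \<noteq> {}"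
        using hyperideal_hadd_hneg[OF H, of "(a, c)" "(a', c')"] that
        by (simp_all add: hneg_prod_hyperring hadd_nonempty hneg_closed C1 C2)
      then show "hadd R1 a (hneg R1 a') \<subseteq> A" "hadd R2 c (hneg R2 c') \<subseteq> B"
        by (simp_all add: times_subset_iff)
    qed
    have mul: "hmul R1 r1 a \<in> A" "hmul R2 r2 c \<in> B"
      if "r1 \<in> carrier R1" "r2 \<in> carrier R2" "a \<in> A" "c \<in> B" for r1 r2 a c
      using hyperideal_hmul[OF H, of "(r1, r2)" "(a, c)"] that by simp_all
    have "a0 \<in> carrier R1" "c0 \<in> carrier R2"
      using a0 c0 sub by blast+
    show "hyperideal R1 A \<and> hyperideal R2 B"
      unfolding hyperideal_def
      using ne sub diff(1)[OF _ _ c0 c0] diff(2)[OF a0 a0]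
        mul(1)[OF _ \<open>c0 \<in> carrier R2\<close> _ c0] mul(2)[OF \<open>a0 \<in> carrier R1\<close> _ a0]
      by simp
  next
    assume "hyperideal R1 A \<and> hyperideal R2 B"
    then have H1: "hyperideal R1 A" and H2: "hyperideal R2 B" by blast+
    have "hadd ?P p (hneg ?P q) \<subseteq> A \<times> B" if pq_in: "p \<in> A \<times> B" "q \<in> A \<times> B" for p q
    proof -
      obtain a c a' c' where pq: "p = (a, c)" "q = (a', c')"
        and in_AB: "a \<in> A" "c \<in> B" "a' \<in> A" "c' \<in> B"
        using pq_in by (metis mem_Times_iff prod.collapse)
      then have "a' \<in> carrier R1" "c' \<in> carrier R2"
        using hyperideal_subset H1 H2 by blast+
      then show ?thesis
        using pq in_AB hyperideal_hadd_hneg[OF H1] hyperideal_hadd_hneg[OF H2]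
        by (simp add: hneg_prod_hyperring C1 C2 times_subset_iff)
    qed
    moreover have "hmul ?P r p \<in> A \<times> B" if "r \<in> carrier ?P" "p \<in> A \<times> B" for r p
      using that hyperideal_hmul[OF H1] hyperideal_hmul[OF H2] by (auto simp: mem_Times_iff)
    ultimately show "hyperideal ?P (A \<times> B)"
      unfolding hyperideal_def
      using H1 H2 by (simp add: hyperideal_subset hyperideal_nonempty times_subset_iff)
  qed
qed

lemma hzero_in_hyperideal:
  assumes "krasner_hyperring R" "hyperideal R I"
  shows "hzero R \<in> I"
proof -
  obtain a where a: "a \<in> I"
    using hyperideal_nonempty[OF assms(2)] by blast
  then have "hmul R (hzero R) a \<in> I"
    using hyperideal_hmul[OF assms(2)] hzero_closed[OF krasner_canonical[OF assms(1)]] by blast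
  then show ?thesis
    using a hyperideal_subset[OF assms(2)] hzero_hmul[OF assms(1)] by auto
qed

lemma hyperideal_prod_eq_times:
  assumes K1: "krasner_hyperring R1" and K2: "krasner_hyperring R2"
    and H: "hyperideal (prod_hyperring R1 R2) N"
  shows "N = fst ` N \<times> snd ` N"
proof
  show "N \<subseteq> fst ` N \<times> snd ` N"
    by force
  have C1: "canonical_hypergroup R1" and C2: "canonical_hypergroup R2"
    using K1 K2 by (auto intro: krasner_canonical)
  have sub: "N \<subseteq> carrier R1 \<times> carrier R2"
    using hyperideal_subset[OF H] by simp
  have zeros: "hzero R1 \<in> carrier R1" "hzero R2 \<in> carrier R2"
    using hzero_closed[OF C1] hzero_closed[OF C2] by blast+
  have combine: "(a, d) \<in> N" if ab: "(a, b) \<in> N" and cd: "(c, d) \<in> N" for a b c d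
  proof -
    have a: "a \<in> carrier R1" and b: "b \<in> carrier R2" and c: "c \<in> carrier R1" and d: "d \<in> carrier R2"
      using ab cd sub by auto
    have a0: "(a, hzero R2) \<in> N"
      using hyperideal_hmul[OF H, of "(hone R1, hzero R2)" "(a, b)"] ab hone_closed[OF K1] zeros
      by (simp add: hone_hmul[OF K1 a] hzero_hmul[OF K2 b])
    have zd: "(hzero R1, d) \<in> N"
      using hyperideal_hmul[OF H, of "(hzero R1, hone R2)" "(c, d)"] cd hone_closed[OF K2] zeros
      by (simp add: hone_hmul[OF K2 d] hzero_hmul[OF K1 c])
    have zz: "(hzero R1, hzero R2) \<in> N"
      using hyperideal_hmul[OF H, of "(hzero R1, hzero R2)" "(a, b)"] ab zeros
      by (simp add: hzero_hmul[OF K1 a] hzero_hmul[OF K2 b])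
    have "hadd R1 (hzero R1) (hneg R1 (hzero R1)) \<times> hadd R2 (hzero R2) (hneg R2 d) \<subseteq> N"
      using hyperideal_hadd_hneg[OF H zz zd] zeros d by (simp add: hneg_prod_hyperring C1 C2)
    then have zd': "(hzero R1, hneg R2 d) \<in> N"
      \<comment> \<open>then \<open>(a, d) \<in> (a, 0) - (0, -d)\<close>, as \<open>(0, d) = -(0, -d)\<close>\<close>
      using zeros d by (simp add: hneg_hzero hzero_hadd hneg_closed C1 C2)
    have "hadd R1 a (hneg R1 (hzero R1)) \<times> hadd R2 (hzero R2) (hneg R2 (hneg R2 d)) \<subseteq> N"
      using hyperideal_hadd_hneg[OF H a0 zd'] zeros d by (simp add: hneg_prod_hyperring hneg_closed C1 C2)
    then show ?thesis
      using a d by (simp add: hneg_hzero hneg_hneg hzero_hadd hadd_hzero C1 C2)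
  qed
  show "fst ` N \<times> snd ` N \<subseteq> N"
  proof
    fix p assume "p \<in> fst ` N \<times> snd ` N"
    then obtain x y where "x \<in> N" "y \<in> N" "p = (fst x, snd y)"
      by auto
    then show "p \<in> N"
      using combine[of "fst x" "snd x" "fst y" "snd y"] by simp
  qed
qed

lemma psi_prime_if_subset:
  "hyperideal R N \<Longrightarrow> N \<subseteq> \<psi> N \<Longrightarrow> psi_prime R \<psi> N"
  unfolding psi_prime_def by blast

lemma psi_prime_prod_times_iff:
  assumes "krasner_hyperring R1" "krasner_hyperring R2"
  shows "psi_prime (prod_hyperring R1 R2) (phi_prod \<phi>1 \<phi>2) (A \<times> B) \<longleftrightarrow>
    hyperideal R1 A \<and> hyperideal R2 B \<and>
    (\<forall>a1\<in>carrier R1. \<forall>a2\<in>carrier R2. \<forall>b1\<in>carrier R1. \<forall>b2\<in>carrier R2.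
       hmul R1 a1 b1 \<in> A \<and> hmul R2 a2 b2 \<in> B \<longrightarrow>
       hmul R1 a1 b1 \<notin> \<phi>1 A \<or> hmul R2 a2 b2 \<notin> \<phi>2 B \<longrightarrow>
       a1 \<in> A \<and> a2 \<in> B \<or> b1 \<in> A \<and> b2 \<in> B)"
proof (cases "hyperideal R1 A \<and> hyperideal R2 B")
  case True
  then have "phi_prod \<phi>1 \<phi>2 (A \<times> B) = \<phi>1 A \<times> \<phi>2 B"
    using hyperideal_nonempty[of R1 A] hyperideal_nonempty[of R2 B] by (simp add: phi_prod_def)
  with True show ?thesis
    unfolding psi_prime_def hyperideal_prod_times_iff[OF assms] by simp
next
  case False
  then show ?thesis
    unfolding psi_prime_def hyperideal_prod_times_iff[OF assms] by blast
qed

lemma psi_prime_prod_swap: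
  assumes "krasner_hyperring R1" "krasner_hyperring R2"
  shows "psi_prime (prod_hyperring R2 R1) (phi_prod \<phi>2 \<phi>1) (B \<times> A) \<longleftrightarrow>
    psi_prime (prod_hyperring R1 R2) (phi_prod \<phi>1 \<phi>2) (A \<times> B)"
  unfolding psi_prime_prod_times_iff[OF assms] psi_prime_prod_times_iff[OF assms(2,1)] by blast

lemma psi_prime_prod_fst_subset_phi:
  assumes K1: "krasner_hyperring R1" and K2: "krasner_hyperring R2"
    and P: "psi_prime (prod_hyperring R1 R2) (phi_prod \<phi>1 \<phi>2) (A \<times> B)"
    and proper: "A \<noteq> carrier R1" "B \<noteq> carrier R2"
  shows "A \<subseteq> \<phi>1 A"
proof
  fix x assume x: "x \<in> A"
  have H1: "hyperideal R1 A" and H2: "hyperideal R2 B"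
    and cond: "\<And>a1 a2 b1 b2. \<lbrakk>a1 \<in> carrier R1; a2 \<in> carrier R2; b1 \<in> carrier R1; b2 \<in> carrier R2;
        hmul R1 a1 b1 \<in> A; hmul R2 a2 b2 \<in> B; hmul R1 a1 b1 \<notin> \<phi>1 A \<or> hmul R2 a2 b2 \<notin> \<phi>2 B\<rbrakk>
        \<Longrightarrow> a1 \<in> A \<and> a2 \<in> B \<or> b1 \<in> A \<and> b2 \<in> B"
    using P unfolding psi_prime_prod_times_iff[OF K1 K2] by blast+
  have "hone R1 \<notin> A" "hone R2 \<notin> B"
    using proper hone_in_hyperideal_iff K1 K2 H1 H2 by blast+
  moreover have "x \<in> carrier R1" "hzero R2 \<in> carrier R2"
    using x hyperideal_subset[OF H1] hzero_closed[OF krasner_canonical[OF K2]] by auto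
  moreover have "hzero R2 \<in> B"
    using hzero_in_hyperideal[OF K2 H2] .
  ultimately show "x \<in> \<phi>1 A"
    using cond[of "hone R1" "hzero R2" x "hone R2"] x hone_closed[OF K1] hone_closed[OF K2]
    by (auto simp: hone_hmul[OF K1] hzero_hmul[OF K2])
qed

lemma psi_prime_prod_proper_iff:
  assumes K1: "krasner_hyperring R1" and K2: "krasner_hyperring R2"
    and H1: "hyperideal R1 A" and H2: "hyperideal R2 B"
    and proper: "A \<noteq> carrier R1" "B \<noteq> carrier R2"
    and "\<phi>1 A \<subseteq> A" "\<phi>2 B \<subseteq> B"
  shows "psi_prime (prod_hyperring R1 R2) (phi_prod \<phi>1 \<phi>2) (A \<times> B) \<longleftrightarrow> \<phi>1 A = A \<and> \<phi>2 B = B"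
proof
  assume P: "psi_prime (prod_hyperring R1 R2) (phi_prod \<phi>1 \<phi>2) (A \<times> B)"
  have "A \<subseteq> \<phi>1 A"
    using psi_prime_prod_fst_subset_phi[OF K1 K2 P proper] .
  moreover have "B \<subseteq> \<phi>2 B"
    using psi_prime_prod_fst_subset_phi[OF K2 K1 _ proper(2,1)] P psi_prime_prod_swap[OF K1 K2] by blast
  ultimately show "\<phi>1 A = A \<and> \<phi>2 B = B"
    using assms(7,8) by blast
next
  assume "\<phi>1 A = A \<and> \<phi>2 B = B"
  then have "phi_prod \<phi>1 \<phi>2 (A \<times> B) = A \<times> B"
    using hyperideal_nonempty[OF H1] hyperideal_nonempty[OF H2] by (simp add: phi_prod_def)
  then show "psi_prime (prod_hyperring R1 R2) (phi_prod \<phi>1 \<phi>2) (A \<times> B)"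
    using psi_prime_if_subset hyperideal_prod_times_iff[OF K1 K2] H1 H2 by blast
qed

lemma psi_prime_prod_carrier_snd_iff:
  assumes K1: "krasner_hyperring R1" and K2: "krasner_hyperring R2"
    and H1: "hyperideal R1 A" and \<phi>2_carrier: "\<phi>2 (carrier R2) \<in> hyperideals R2 \<union> {{}}"
  shows "psi_prime (prod_hyperring R1 R2) (phi_prod \<phi>1 \<phi>2) (A \<times> carrier R2) \<longleftrightarrow>
    psi_prime R1 \<phi>1 A \<and> (\<phi>2 (carrier R2) \<noteq> carrier R2 \<longrightarrow> prime_hyperideal R1 A)"
proof -
  have one: "hone R2 \<in> \<phi>2 (carrier R2) \<longleftrightarrow> \<phi>2 (carrier R2) = carrier R2"
    using \<phi>2_carrier hone_in_hyperideal_iff[OF K2] hone_closed[OF K2] unfolding hyperideals_def by auto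
  show ?thesis
  proof
    assume P: "psi_prime (prod_hyperring R1 R2) (phi_prod \<phi>1 \<phi>2) (A \<times> carrier R2)"
    have "x \<in> A \<or> y \<in> A"
      if "x \<in> carrier R1" "y \<in> carrier R1" "hmul R1 x y \<in> A"
        "hmul R1 x y \<notin> \<phi>1 A \<or> hone R2 \<notin> \<phi>2 (carrier R2)" for x y
      using P that hone_closed[OF K2] unfolding psi_prime_prod_times_iff[OF K1 K2]
      by (simp add: hone_hmul[OF K2])
    then show "psi_prime R1 \<phi>1 A \<and> (\<phi>2 (carrier R2) \<noteq> carrier R2 \<longrightarrow> prime_hyperideal R1 A)"
      unfolding psi_prime_def prime_hyperideal_def using H1 one by blast
  next
    assume "psi_prime R1 \<phi>1 A \<and> (\<phi>2 (carrier R2) \<noteq> carrier R2 \<longrightarrow> prime_hyperideal R1 A)"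
    then show "psi_prime (prod_hyperring R1 R2) (phi_prod \<phi>1 \<phi>2) (A \<times> carrier R2)"
      unfolding psi_prime_prod_times_iff[OF K1 K2]
      using H1 hyperideal_carrier[OF K2] hmul_closed[OF K2]
      by (auto simp: psi_prime_def prime_hyperideal_def)
  qed
qed

theorem mainTheorem11:
  fixes R1 :: "'a hyperring" and R2 :: "'b hyperring"
    and \<phi>1 :: "'a set \<Rightarrow> 'a set" and \<phi>2 :: "'b set \<Rightarrow> 'b set"
    and N :: "('a \<times> 'b) set"
  assumes "krasner_hyperring R1" and "krasner_hyperring R2"
    and "\<forall>I\<in>hyperideals R1. \<phi>1 I \<in> hyperideals R1 \<union> {{}}"
    and "\<forall>I\<in>hyperideals R2. \<phi>2 I \<in> hyperideals R2 \<union> {{}}"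
    and "\<forall>I\<in>hyperideals R1. \<phi>1 I \<subseteq> I"
    and "\<forall>I\<in>hyperideals R2. \<phi>2 I \<subseteq> I"
    and "N \<in> hyperideals (prod_hyperring R1 R2)"
    and "N \<noteq> carrier (prod_hyperring R1 R2)"
  shows "psi_prime (prod_hyperring R1 R2) (phi_prod \<phi>1 \<phi>2) N \<longleftrightarrow>
     (\<exists>N1 N2. N = N1 \<times> N2 \<and> N1 \<in> hyperideals R1 \<and> N1 \<noteq> carrier R1 \<and>
        N2 \<in> hyperideals R2 \<and> N2 \<noteq> carrier R2 \<and> \<phi>1 N1 = N1 \<and> \<phi>2 N2 = N2) \<or>
     (\<exists>N1. N = N1 \<times> carrier R2 \<and> N1 \<in> hyperideals R1 \<and> N1 \<noteq> carrier R1 \<and>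
        psi_prime R1 \<phi>1 N1 \<and> (\<phi>2 (carrier R2) \<noteq> carrier R2 \<longrightarrow> prime_hyperideal R1 N1)) \<or>
     (\<exists>N2. N = carrier R1 \<times> N2 \<and> N2 \<in> hyperideals R2 \<and> N2 \<noteq> carrier R2 \<and>
        psi_prime R2 \<phi>2 N2 \<and> (\<phi>1 (carrier R1) \<noteq> carrier R1 \<longrightarrow> prime_hyperideal R2 N2))"
proof -
  note K1 = assms(1) and K2 = assms(2)
  obtain A B where N: "N = A \<times> B" and H1: "hyperideal R1 A" and H2: "hyperideal R2 B"
    using hyperideal_prod_eq_times[OF K1 K2] hyperideal_prod_times_iff[OF K1 K2] assms(7)
    unfolding hyperideals_def by (metis mem_Collect_eq)
  have \<phi>_carrier: "\<phi>1 (carrier R1) \<in> hyperideals R1 \<union> {{}}" "\<phi>2 (carrier R2) \<in> hyperideals R2 \<union> {{}}"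
    using assms(3,4) hyperideal_carrier[OF K1] hyperideal_carrier[OF K2] unfolding hyperideals_def by blast+
  have factors_eq: "A \<times> B = A' \<times> B' \<longleftrightarrow> A = A' \<and> B = B'" for A' :: "'a set" and B' :: "'b set"
    using hyperideal_nonempty[OF H1] hyperideal_nonempty[OF H2] by auto
  consider (proper) "A \<noteq> carrier R1" "B \<noteq> carrier R2" | (snd) "A \<noteq> carrier R1" "B = carrier R2"
    | (fst) "A = carrier R1" "B \<noteq> carrier R2"
    using assms(8) N by fastforce
  then show ?thesis
  proof cases
    case proper
    then show ?thesis
      using psi_prime_prod_proper_iff[OF K1 K2 H1 H2 proper] assms(5,6) H1 H2
      unfolding N factors_eq hyperideals_def by simp
  next
    case snd
    then show ?thesis
      using psi_prime_prod_carrier_snd_iff[of _ _ _ \<phi>2, OF K1 K2 H1 \<phi>_carrier(2)] H1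
      unfolding N factors_eq hyperideals_def by simp
  next
    case fst
    then show ?thesis
      using psi_prime_prod_carrier_snd_iff[of _ _ _ \<phi>1, OF K2 K1 H2 \<phi>_carrier(1)] psi_prime_prod_swap[OF K1 K2] H2
      unfolding N factors_eq hyperideals_def by simp
  qed
qed

end
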